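(* For every natural number $d>1$ and every $\varepsilon>0$ there are $L,D>0$ such that the following holds. Let $G=(V_1,V_2,E)$ be a bipartite graph and let $u_1,\ldots,u_L\in V_1$ be such that $S_i:=N(u_i)\setminus\bigcup_{j<i}N(u_j)$ satisfies $|S_i|\ge D$ for all $i\in[L]$. If $W\subset V_2$ is chosen uniformly at random among all subsets of $V_2$, then with probability at least $1-\varepsilon$ the following holds: for every pair $(k,m)$ of integers with $0\le k\le m$ and $2\le m\le d$ there is $i\in[L]$ with $d^W(u_i)\equiv k\pmod m$.
   Context: A bipartite graph $G=(V_1,V_2,E)$ has vertex set $V_1\sqcup V_2$ and edge set $E\subset V_1\times V_2$; $N(v)$ is the neighbourhood of $v$ and $d^W(v)=|N(v)\cap W|$. *)

theory Defs
  imports "HOL-Probability.Probability"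
begin

definition nbhd :: "(nat \<times> nat) set \<Rightarrow> nat set \<Rightarrow> nat \<Rightarrow> nat set" where
  "nbhd E V2 u = {v \<in> V2. (u, v) \<in> E}"

definition degW :: "(nat \<times> nat) set \<Rightarrow> nat set \<Rightarrow> nat set \<Rightarrow> nat \<Rightarrow> nat" where
  "degW E V2 W u = card (nbhd E V2 u \<inter> W)"

definition bipartite_graph :: "nat set \<Rightarrow> nat set \<Rightarrow> (nat \<times> nat) set \<Rightarrow> bool" where
  "bipartite_graph V1 V2 E \<longleftrightarrow> finite V1 \<and> finite V2 \<and> V1 \<inter> V2 = {} \<and> E \<subseteq> V1 \<times> V2"

end

theory Submission
  imports Defs
begin

text \<open>Fix a pair (k, m) and put q = 1 - 2^-d. Choose d vertices T_i in S_i. Once W - T_i is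
  fixed, the degrees d^W(u_j) for j < i are determined, because T_i avoids N(u_j), while
  d^W(u_i) = c + |W \<inter> T_i| for some constant c. As |W \<inter> T_i| takes every value 0, ..., d,
  at least one of the 2^d choices of W \<inter> T_i gives d^W(u_i) = k (mod m). Hence all of
  u_1, ..., u_L miss k modulo m with probability at most q^L, and a union bound over the at
  most (d + 1)^2 pairs (k, m) gives the claim once (d + 1)^2 q^L \<le> \<epsilon>.\<close>

lemma card_Pow_filter_split:
  assumes "finite V" "T \<subseteq> V"
  shows "card {W \<in> Pow V. P W} = (\<Sum>W\<in>Pow (V - T). card {X \<in> Pow T. P (W \<union> X)})"
proof -
  let ?S = "SIGMA W:Pow (V - T). {X \<in> Pow T. P (W \<union> X)}"
  have "bij_betw (\<lambda>(W, X). W \<union> X) ?S {W \<in> Pow V. P W}"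
    by (rule bij_betw_byWitness[where f' = "\<lambda>W. (W - T, W \<inter> T)"])
      (use assms(2) in \<open>auto simp: Un_Diff_Int\<close>)
  then have "card {W \<in> Pow V. P W} = card ?S"
    by (simp add: bij_betw_same_card)
  also have "\<dots> = (\<Sum>W\<in>Pow (V - T). card {X \<in> Pow T. P (W \<union> X)})"
    using assms by (intro card_SigmaI) (auto intro: rev_finite_subset[of "Pow T"] finite_subset)
  finally show ?thesis .
qed

lemma exists_subset_card_mod:
  assumes "finite T" "0 < m" "m \<le> card T + 1"
  obtains X where "X \<subseteq> T" "(c + card X) mod m = r mod m"
proof -
  define j where "j = (r mod m + m - c mod m) mod m"
  have "j < m"
    using assms(2) by (simp add: j_def)
  then have "j \<le> card T"
    using assms(3) by linarith
  then obtain X where "X \<subseteq> T" "card X = j"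
    by (meson obtain_subset_with_card_n)
  moreover have "(c + j) mod m = r mod m"
  proof -
    have "c mod m < m"
      using assms(2) by simp
    then have "c + (r mod m + m - c mod m) = r mod m + c div m * m + m"
      using div_mult_mod_eq[of c m] by linarith
    then show ?thesis
      by (simp add: j_def mod_add_right_eq)
  qed
  ultimately show thesis using that by blast
qed

lemma card_Pow_filter_conj_le:
  assumes "finite V" "T \<subseteq> V"
    and Q_local: "\<And>W X. W \<subseteq> V - T \<Longrightarrow> X \<subseteq> T \<Longrightarrow> Q (W \<union> X) = Q W"
    and R_bound: "\<And>W. W \<subseteq> V - T \<Longrightarrow> card {X \<in> Pow T. R (W \<union> X)} \<le> b"
  shows "2 ^ card T * card {W \<in> Pow V. Q W \<and> R W} \<le> b * card {W \<in> Pow V. Q W}"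
proof -
  let ?Q = "{W \<in> Pow (V - T). Q W}"
  have fin: "finite (Pow (V - T))" "finite T"
    using assms(1,2) by (auto intro: finite_subset)
  have "card {W \<in> Pow V. Q W \<and> R W}
      = (\<Sum>W\<in>Pow (V - T). card {X \<in> Pow T. Q (W \<union> X) \<and> R (W \<union> X)})"
    using assms(1,2) by (rule card_Pow_filter_split)
  also have "\<dots> = (\<Sum>W\<in>Pow (V - T). if Q W then card {X \<in> Pow T. R (W \<union> X)} else 0)"
  proof (rule sum.cong)
    fix W assume "W \<in> Pow (V - T)"
    then have "{X \<in> Pow T. Q (W \<union> X) \<and> R (W \<union> X)} = (if Q W then {X \<in> Pow T. R (W \<union> X)} else {})"
      using Q_local by auto
    then show "card {X \<in> Pow T. Q (W \<union> X) \<and> R (W \<union> X)}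
        = (if Q W then card {X \<in> Pow T. R (W \<union> X)} else 0)"
      by simp
  qed simp
  also have "\<dots> = (\<Sum>W\<in>?Q. card {X \<in> Pow T. R (W \<union> X)})"
    by (simp only: sum.inter_filter[OF fin(1)])
  also have "\<dots> \<le> card ?Q * b"
    using R_bound sum_bounded_above[of ?Q "\<lambda>W. card {X \<in> Pow T. R (W \<union> X)}" b] by auto
  finally have QR: "card {W \<in> Pow V. Q W \<and> R W} \<le> card ?Q * b" .
  have "card {W \<in> Pow V. Q W} = (\<Sum>W\<in>Pow (V - T). card {X \<in> Pow T. Q (W \<union> X)})"
    using assms(1,2) by (rule card_Pow_filter_split)
  also have "\<dots> = (\<Sum>W\<in>Pow (V - T). if Q W then card (Pow T) else 0)"
  proof (rule sum.cong)
    fix W assume "W \<in> Pow (V - T)"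
    then have "{X \<in> Pow T. Q (W \<union> X)} = (if Q W then Pow T else {})"
      using Q_local by auto
    then show "card {X \<in> Pow T. Q (W \<union> X)} = (if Q W then card (Pow T) else 0)"
      by simp
  qed simp
  also have "\<dots> = card (Pow T) * card ?Q"
    by (simp add: sum.inter_filter[OF fin(1), symmetric])
  finally have Q: "card {W \<in> Pow V. Q W} = 2 ^ card T * card ?Q"
    using fin(2) by (simp add: card_Pow)
  have "2 ^ card T * card {W \<in> Pow V. Q W \<and> R W} \<le> 2 ^ card T * (card ?Q * b)"
    using QR by simp
  also have "\<dots> = b * card {W \<in> Pow V. Q W}"
    unfolding Q by (simp add: ac_simps)
  finally show ?thesis .
qed

lemma card_Pow_card_Int_mod_neq_less:
  assumes "finite W" "finite T" "T \<subseteq> N" "W \<inter> T = {}" "0 < m" "m \<le> card T + 1"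
  shows "card {X \<in> Pow T. card (N \<inter> (W \<union> X)) mod m \<noteq> r mod m} < 2 ^ card T"
proof -
  obtain X0 where X0: "X0 \<subseteq> T" "(card (N \<inter> W) + card X0) mod m = r mod m"
    using exists_subset_card_mod[OF assms(2,5,6)] .
  have "N \<inter> (W \<union> X0) = (N \<inter> W) \<union> X0" "(N \<inter> W) \<inter> X0 = {}"
    using X0(1) assms(3,4) by auto
  moreover have "finite X0"
    using X0(1) assms(2) by (rule finite_subset)
  ultimately have "card (N \<inter> (W \<union> X0)) mod m = r mod m"
    using X0(2) assms(1) by (simp add: card_Un_disjoint)
  with X0(1) have "{X \<in> Pow T. card (N \<inter> (W \<union> X)) mod m \<noteq> r mod m} \<subset> Pow T"
    by auto
  then have "card {X \<in> Pow T. card (N \<inter> (W \<union> X)) mod m \<noteq> r mod m} < card (Pow T)"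
    using assms(2) by (intro psubset_card_mono) simp_all
  then show ?thesis
    using assms(2) by (simp add: card_Pow)
qed

lemma card_Pow_avoiding_residue_le:
  fixes N :: "nat \<Rightarrow> 'a set"
  assumes "finite V" and N_sub: "\<And>i. N i \<subseteq> V" and "0 < m" "m \<le> D + 1"
    and new_nbhd: "\<And>i. i \<in> {1..n} \<Longrightarrow> D \<le> card (N i - (\<Union>j\<in>{1..<i}. N j))"
  shows "real (card {W \<in> Pow V. \<forall>i\<in>{1..n}. card (N i \<inter> W) mod m \<noteq> r mod m})
      \<le> (1 - 1 / 2 ^ D) ^ n * 2 ^ card V"
  using new_nbhd
proof (induction n)
  case 0
  then show ?case
    using \<open>finite V\<close> by (simp add: card_Pow flip: Pow_def)
next
  case (Suc n)
  define Q where "Q W \<longleftrightarrow> (\<forall>i\<in>{1..n}. card (N i \<inter> W) mod m \<noteq> r mod m)" for W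
  define R where "R W \<longleftrightarrow> card (N (Suc n) \<inter> W) mod m \<noteq> r mod m" for W
  have "D \<le> card (N (Suc n) - (\<Union>j\<in>{1..<Suc n}. N j))"
    using Suc.prems by simp
  then obtain T where T: "T \<subseteq> N (Suc n) - (\<Union>j\<in>{1..<Suc n}. N j)" "card T = D"
    by (meson obtain_subset_with_card_n)
  have "T \<subseteq> V"
    using T(1) N_sub by blast
  then have "finite T"
    using \<open>finite V\<close> by (rule finite_subset)
  have Q_local: "Q (W \<union> X) = Q W" if "X \<subseteq> T" for W X
  proof -
    have "N i \<inter> (W \<union> X) = N i \<inter> W" if "i \<in> {1..n}" for i
      using T(1) \<open>X \<subseteq> T\<close> that by auto
    then show ?thesis
      by (simp add: Q_def)
  qed
  have R_bound: "card {X \<in> Pow T. R (W \<union> X)} \<le> 2 ^ D - 1" if "W \<subseteq> V - T" for W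
  proof -
    have "finite W" "T \<subseteq> N (Suc n)" "W \<inter> T = {}"
      using finite_subset[of W V] that T(1) \<open>finite V\<close> by auto
    then have "card {X \<in> Pow T. R (W \<union> X)} < 2 ^ card T"
      unfolding R_def using \<open>finite T\<close> \<open>0 < m\<close> \<open>m \<le> D + 1\<close> T(2)
      by (intro card_Pow_card_Int_mod_neq_less) simp_all
    then show ?thesis
      using T(2) by simp
  qed
  have conditioned: "2 ^ D * card {W \<in> Pow V. Q W \<and> R W} \<le> (2 ^ D - 1) * card {W \<in> Pow V. Q W}"
    using card_Pow_filter_conj_le[OF \<open>finite V\<close> \<open>T \<subseteq> V\<close>, of Q R "2 ^ D - 1"] Q_local R_bound T(2)
    by simp
  have "2 ^ D * real (card {W \<in> Pow V. Q W \<and> R W}) \<le> (2 ^ D - 1) * real (card {W \<in> Pow V. Q W})"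
    using of_nat_mono[OF conditioned, where 'a = real] by (simp add: of_nat_diff)
  then have "real (card {W \<in> Pow V. Q W \<and> R W}) \<le> (1 - 1 / 2 ^ D) * card {W \<in> Pow V. Q W}"
    by (simp add: field_simps)
  also have "\<dots> \<le> (1 - 1 / 2 ^ D) * ((1 - 1 / 2 ^ D) ^ n * 2 ^ card V)"
    using Suc by (intro mult_left_mono) (auto simp: Q_def)
  finally show ?case
    by (simp add: Q_def R_def atLeastAtMostSuc_conv conj_commute)
qed

lemma prob_Pow_avoiding_residue_le:
  fixes N :: "nat \<Rightarrow> 'a set"
  assumes "finite V" "\<And>i. N i \<subseteq> V" "0 < m" "m \<le> D + 1"
    and "\<And>i. i \<in> {1..n} \<Longrightarrow> D \<le> card (N i - (\<Union>j\<in>{1..<i}. N j))"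
  shows "measure_pmf.prob (pmf_of_set (Pow V)) {W. \<forall>i\<in>{1..n}. card (N i \<inter> W) mod m \<noteq> r mod m}
      \<le> (1 - 1 / 2 ^ D) ^ n"
proof -
  have "measure_pmf.prob (pmf_of_set (Pow V)) {W. \<forall>i\<in>{1..n}. card (N i \<inter> W) mod m \<noteq> r mod m}
      = real (card {W \<in> Pow V. \<forall>i\<in>{1..n}. card (N i \<inter> W) mod m \<noteq> r mod m}) / 2 ^ card V"
    using \<open>finite V\<close> by (subst measure_pmf_of_set) (auto simp: card_Pow Int_def)
  also have "\<dots> \<le> (1 - 1 / 2 ^ D) ^ n"
    using card_Pow_avoiding_residue_le[OF assms] by (simp add: divide_le_eq)
  finally show ?thesis .
qed

lemma prob_Pow_all_residues_hit_ge:
  fixes N :: "nat \<Rightarrow> 'a set" and d D :: nat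
  assumes "finite V" "\<And>i. N i \<subseteq> V" "d \<le> D + 1"
    and "\<And>i. i \<in> {1..n} \<Longrightarrow> D \<le> card (N i - (\<Union>j\<in>{1..<i}. N j))"
  shows "measure_pmf.prob (pmf_of_set (Pow V))
      {W. \<forall>k m. k \<le> m \<and> 2 \<le> m \<and> m \<le> d \<longrightarrow> (\<exists>i\<in>{1..n}. card (N i \<inter> W) mod m = k mod m)}
    \<ge> 1 - (d + 1) ^ 2 * (1 - 1 / 2 ^ D) ^ n"
proof -
  let ?prob = "measure_pmf.prob (pmf_of_set (Pow V))"
  define P where "P = {(k :: nat, m). k \<le> m \<and> 2 \<le> m \<and> m \<le> d}"
  define Bad where "Bad p = {W. \<forall>i\<in>{1..n}. card (N i \<inter> W) mod snd p \<noteq> fst p mod snd p}" for p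
  have "P \<subseteq> {0..d} \<times> {0..d}"
    by (auto simp: P_def)
  then have "finite P" "card P \<le> (d + 1) ^ 2"
    using card_mono[of "{0..d} \<times> {0..d}" P] by (auto intro: finite_subset simp: power2_eq_square)
  have "?prob (\<Union>p\<in>P. Bad p) \<le> (\<Sum>p\<in>P. ?prob (Bad p))"
    using \<open>finite P\<close> by (rule measure_pmf.finite_measure_subadditive_finite) simp
  also have "\<dots> \<le> (\<Sum>p\<in>P. (1 - 1 / 2 ^ D) ^ n)"
    by (rule sum_mono, unfold Bad_def, rule prob_Pow_avoiding_residue_le) (use assms in \<open>auto simp: P_def\<close>)
  also have "\<dots> \<le> (d + 1) ^ 2 * (1 - 1 / 2 ^ D) ^ n"
    using of_nat_mono[OF \<open>card P \<le> (d + 1) ^ 2\<close>, where 'a = real] by (simp add: mult_right_mono)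
  moreover have "{W. \<forall>k m. k \<le> m \<and> 2 \<le> m \<and> m \<le> d \<longrightarrow> (\<exists>i\<in>{1..n}. card (N i \<inter> W) mod m = k mod m)}
      = UNIV - (\<Union>p\<in>P. Bad p)"
    unfolding P_def Bad_def by fastforce
  ultimately show ?thesis
    using measure_pmf.prob_compl[of "\<Union>p\<in>P. Bad p"] by simp
qed

lemma obtain_pos_power_le:
  fixes q c \<epsilon> :: real
  assumes "0 \<le> q" "q < 1" "0 < \<epsilon>"
  obtains L :: nat where "0 < L" "c * q ^ L \<le> \<epsilon>"
proof -
  obtain n where n: "q ^ n < \<epsilon> / (\<bar>c\<bar> + 1)"
    using real_arch_pow_inv[of "\<epsilon> / (\<bar>c\<bar> + 1)" q] assms by auto
  have "c * q ^ Suc n \<le> (\<bar>c\<bar> + 1) * q ^ n"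
    using assms(1,2) by (intro mult_mono power_decreasing) auto
  also have "\<dots> < \<epsilon>"
    using n by (simp add: field_simps add_pos_nonneg)
  finally show thesis
    using that[of "Suc n"] by simp
qed

theorem lemma3p5:
  fixes d :: nat and \<epsilon> :: real
  assumes "d > 1" and "\<epsilon> > 0"
  shows "\<exists>L D :: nat. L > 0 \<and> D > 0 \<and>
    (\<forall>V1 V2 E (u :: nat \<Rightarrow> nat).
       bipartite_graph V1 V2 E \<longrightarrow>
       (\<forall>i\<in>{1..L}. u i \<in> V1) \<longrightarrow>
       (\<forall>i\<in>{1..L}. card (nbhd E V2 (u i) - (\<Union>j\<in>{1..<i}. nbhd E V2 (u j))) \<ge> D) \<longrightarrow>
       measure_pmf.prob (pmf_of_set (Pow V2))
         {W. \<forall>k m. k \<le> m \<and> 2 \<le> m \<and> m \<le> d \<longrightarrow>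
               (\<exists>i\<in>{1..L}. degW E V2 W (u i) mod m = k mod m)} \<ge> 1 - \<epsilon>)"
proof -
  obtain L where "0 < L" and L: "(d + 1) ^ 2 * (1 - 1 / 2 ^ d) ^ L \<le> \<epsilon>"
    using obtain_pos_power_le[of "1 - 1 / 2 ^ d" \<epsilon> "(d + 1) ^ 2"] \<open>\<epsilon> > 0\<close> by auto
  show ?thesis
  proof (rule exI[of _ L], rule exI[of _ d], intro conjI allI impI)
    show "0 < L" "0 < d"
      using \<open>0 < L\<close> \<open>d > 1\<close> by auto
    fix V1 V2 E and u :: "nat \<Rightarrow> nat"
    assume "bipartite_graph V1 V2 E"
      and new_nbhd: "\<forall>i\<in>{1..L}. d \<le> card (nbhd E V2 (u i) - (\<Union>j\<in>{1..<i}. nbhd E V2 (u j)))"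
    then have "finite V2"
      by (simp add: bipartite_graph_def)
    show "measure_pmf.prob (pmf_of_set (Pow V2))
         {W. \<forall>k m. k \<le> m \<and> 2 \<le> m \<and> m \<le> d \<longrightarrow>
               (\<exists>i\<in>{1..L}. degW E V2 W (u i) mod m = k mod m)} \<ge> 1 - \<epsilon>"
      unfolding degW_def
      by (rule order_trans[OF _ prob_Pow_all_residues_hit_ge[of V2 "\<lambda>i. nbhd E V2 (u i)" d d L]])
        (use L new_nbhd \<open>finite V2\<close> in \<open>auto simp: nbhd_def\<close>)
  qed
qed

end
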